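(* Let $S$ be a collection of non-vertical segments in $\mathbb{R}^3$ in general position, let $G_S$ be the mixed graph associated to $S$ (defined in the context), and let $k\ge 0$ be an integer. Then all depth cycles of $S$ can be eliminated with at most $k$ cuts if and only if $G_S$ admits a feedback vertex set of size at most $k$.
   Context: Segments are closed line segments in $\mathbb{R}^3$, non-vertical meaning not parallel to the $z$-axis. For a segment $s$ let $\bar s$ be its orthogonal projection to the $xy$-plane. General position: segments are pairwise disjoint in $\mathbb{R}^3$; any two projections meet in at most one point; no point of the plane lies on three or more projections. Relation: $s \succ s'$ if some vertical line $\ell$ meets both $s$ and $s'$ and the $z$-coordinate of $\ell\cap s$ exceeds that of $\ell\cap s'$. A depth cycle is a sequence $s_1\succ s_2\succ\dots\succ s_p=s_1$ ($p\ge2$). Cutting a segment $s$ at points $q_1,\dots,q_m\in s$ replaces $s$ by the connected components of $s\setminus\{q_1,\dots,q_m\}$, and $\succ$ is evaluated on the resulting pieces; each cut point counts as one cut. Depth cycles are eliminated if the resulting pieces have no depth cycle. Mixed graphs: a mixed graph $(V,E,A)$ has vertex set $V$, a set $E$ of undirected edges $\{u,v\}$ and a set $A$ of directed arcs $(u,v)$ (tail $u$, head $v$). A cycle is a sequence $v_1,\dots,v_\ell$ with $v_\ell=v_1$, $\ell\ge3$, $v_1,\dots,v_{\ell-1}$ pairwise distinct, such that for each $1\le i\le \ell-1$ either $\{v_i,v_{i+1}\}\in E$ or $(v_i,v_{i+1})\in A$, and no undirected edge is used twice. A feedback vertex set is a set $U\subseteq V$ such that the graph obtained by deleting $U$ has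 no cycle. The graph $G_S=(V,E,A)$: for $s\in S$ let $I(s)$ be the set of points where $\bar s$ meets $\bar t$ for some $t\in S\setminus\{s\}$, listed in order along $\bar s$ as $p^s_1,\dots,p^s_{|I(s)|}$. For each $s$ create vertices $v^s_1,\dots,v^s_{|I(s)|}$ ($v^s_i$ represents $p^s_i$, i.e. the point of $s$ above $p^s_i$), and let $V$ be the union over all $s\in S$. For each $s$ add undirected edges $\{v^s_i,v^s_{i+1}\}$ for $1\le i\le |I(s)|-1$. For each pair $s\succ t$ with $\bar s\cap\bar t\neq\emptyset$, if $p^s_i=p^t_j$ is the common point, add the arc $(v^s_i,v^t_j)$. A vertex set $U$ corresponds to the set of cuts that cuts each segment $s$ at the points of $s$ lying above $p^s_i$ for $v^s_i\in U$. *)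

theory Defs
  imports "HOL-Analysis.Analysis"
begin

type_synonym point3 = "real \<times> real \<times> real"
type_synonym point2 = "real \<times> real"

definition proj :: "point3 \<Rightarrow> point2" where
  "proj p = (fst p, fst (snd p))"

definition zc :: "point3 \<Rightarrow> real" where
  "zc p = snd (snd p)"

definition nonvertical_segment :: "point3 set \<Rightarrow> bool" where
  "nonvertical_segment s \<longleftrightarrow> (\<exists>a b. s = closed_segment a b \<and> proj a \<noteq> proj b)"

definition general_position :: "point3 set set \<Rightarrow> bool" where
  "general_position S \<longleftrightarrow>
     (\<forall>s\<in>S. \<forall>t\<in>S. s \<noteq> t \<longrightarrow> s \<inter> t = {}) \<and>
     (\<forall>s\<in>S. \<forall>t\<in>S. s \<noteq> t \<longrightarrow>
        (\<forall>x y. x \<in> proj ` s \<inter> proj ` t \<and> y \<in> proj ` s \<inter> proj ` t \<longrightarrow> x = y)) \<and>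
     (\<forall>x. \<not> (\<exists>s\<in>S. \<exists>t\<in>S. \<exists>u\<in>S. s \<noteq> t \<and> s \<noteq> u \<and> t \<noteq> u \<and>
                x \<in> proj ` s \<and> x \<in> proj ` t \<and> x \<in> proj ` u))"

definition above :: "point3 set \<Rightarrow> point3 set \<Rightarrow> bool" where
  "above P Q \<longleftrightarrow> (\<exists>p\<in>P. \<exists>q\<in>Q. proj p = proj q \<and> zc p > zc q)"

definition has_depth_cycle :: "point3 set set \<Rightarrow> bool" where
  "has_depth_cycle T \<longleftrightarrow>
     (\<exists>f :: nat \<Rightarrow> point3 set. \<exists>p::nat. p \<ge> 2 \<and> (\<forall>i<p. f i \<in> T) \<and>
        (\<forall>i. i + 1 < p \<longrightarrow> above (f i) (f (i + 1))) \<and> f (p - 1) = f 0)"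

definition pieces :: "point3 set set \<Rightarrow> point3 set \<Rightarrow> point3 set set" where
  "pieces S C = (\<Union>s\<in>S. components (s - C))"

definition mixed_cycle :: "'v set \<Rightarrow> 'v set set \<Rightarrow> ('v \<times> 'v) set \<Rightarrow> (nat \<Rightarrow> 'v) \<Rightarrow> nat \<Rightarrow> bool" where
  "mixed_cycle V E A v l \<longleftrightarrow>
     l \<ge> 3 \<and> v (l - 1) = v 0 \<and> (\<forall>i<l. v i \<in> V) \<and>
     (\<forall>i j. i < l - 1 \<and> j < l - 1 \<and> i \<noteq> j \<longrightarrow> v i \<noteq> v j) \<and>
     (\<exists>use_arc :: nat \<Rightarrow> bool.
        (\<forall>i < l - 1. (use_arc i \<longrightarrow> (v i, v (i + 1)) \<in> A) \<and>
                     (\<not> use_arc i \<longrightarrow> {v i, v (i + 1)} \<in> E)) \<and>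
        (\<forall>i j. i < l - 1 \<and> j < l - 1 \<and> i \<noteq> j \<and> \<not> use_arc i \<and> \<not> use_arc j \<longrightarrow>
               {v i, v (i + 1)} \<noteq> {v j, v (j + 1)}))"

definition has_mixed_cycle :: "'v set \<Rightarrow> 'v set set \<Rightarrow> ('v \<times> 'v) set \<Rightarrow> bool" where
  "has_mixed_cycle V E A \<longleftrightarrow> (\<exists>v l. mixed_cycle V E A v l)"

definition delete_vertices :: "'v set \<Rightarrow> 'v set \<Rightarrow> 'v set set \<Rightarrow> ('v \<times> 'v) set
    \<Rightarrow> 'v set \<times> 'v set set \<times> ('v \<times> 'v) set" where
  "delete_vertices U V E A = (V - U, {e \<in> E. e \<inter> U = {}}, {a \<in> A. fst a \<notin> U \<and> snd a \<notin> U})"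

definition feedback_vertex_set :: "'v set \<Rightarrow> 'v set set \<Rightarrow> ('v \<times> 'v) set \<Rightarrow> 'v set \<Rightarrow> bool" where
  "feedback_vertex_set V E A U \<longleftrightarrow> U \<subseteq> V \<and>
     (case delete_vertices U V E A of (V', E', A') \<Rightarrow> \<not> has_mixed_cycle V' E' A')"

text \<open>The graph G_S. The vertex v^s_i is represented as the pair (s, p^s_i);
  consecutive points of I(s) along the projection of s are joined by edges.\<close>
definition Ipts :: "point3 set set \<Rightarrow> point3 set \<Rightarrow> point2 set" where
  "Ipts S s = {x. x \<in> proj ` s \<and> (\<exists>t\<in>S. t \<noteq> s \<and> x \<in> proj ` t)}"

definition GS_V :: "point3 set set \<Rightarrow> (point3 set \<times> point2) set" where
  "GS_V S = {(s, x). s \<in> S \<and> x \<in> Ipts S s}"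

definition GS_E :: "point3 set set \<Rightarrow> (point3 set \<times> point2) set set" where
  "GS_E S = {{(s, x), (s, y)} | s x y. s \<in> S \<and> x \<in> Ipts S s \<and> y \<in> Ipts S s \<and> x \<noteq> y \<and>
                (\<forall>z \<in> Ipts S s. z \<notin> open_segment x y)}"

definition GS_A :: "point3 set set \<Rightarrow> ((point3 set \<times> point2) \<times> (point3 set \<times> point2)) set" where
  "GS_A S = {((s, x), (t, x)) | s t x. s \<in> S \<and> t \<in> S \<and> s \<noteq> t \<and> above s t \<and>
                x \<in> proj ` s \<inter> proj ` t}"

end

theory Submission
  imports Defs
begin

text \<open>If \<open>U\<close> is a feedback vertex set of \<open>G_S\<close>, cut every segment at the points above the
  vertices of \<open>U\<close>. A depth cycle among the resulting pieces, chosen simple, passes from each piece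
  to the next at a crossing of two projections, which is an arc of \<open>G_S\<close>; inside a piece,
  consecutive crossings along the segment are joined by edges, and no vertex above a point of the
  piece lies in \<open>U\<close>. Concatenating gives a cycle of \<open>G_S - U\<close>.

  Conversely, given cuts \<open>C\<close> with no depth cycle, charge each cut to the last vertex at or before
  it on its segment, and delete the charged vertices; there are at most \<open>|C|\<close> of them. Every
  remaining vertex lies in a piece, edges between remaining vertices stay inside one piece, and
  arcs go from a piece to a piece below it. A cycle using an arc would give a depth cycle, and a
  cycle using only edges stays on one segment, where its topmost vertex would need two lower
  neighbours, whereas every vertex has at most one.\<close>

section \<open>Coordinates along a non-vertical segment\<close>

lemma line_point_in_closed_segment_iff:
  fixes P d :: "'a::real_vector"
  assumes "d \<noteq> 0"
  shows "P + u *\<^sub>R d \<in> closed_segment (P + t1 *\<^sub>R d) (P + t2 *\<^sub>R d) \<longleftrightarrow>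
         t1 \<le> u \<and> u \<le> t2 \<or> t2 \<le> u \<and> u \<le> t1"
proof -
  have "linear (\<lambda>t::real. t *\<^sub>R d)"
    by simp
  then have "closed_segment (P + t1 *\<^sub>R d) (P + t2 *\<^sub>R d) = (\<lambda>t. P + t *\<^sub>R d) ` closed_segment t1 t2"
    using closed_segment_translation[of P "t1 *\<^sub>R d" "t2 *\<^sub>R d"]
      closed_segment_linear_image[of "\<lambda>t. t *\<^sub>R d" t1 t2] by (simp add: image_image)
  moreover have "inj (\<lambda>t. P + t *\<^sub>R d)"
    using assms by (auto simp: inj_def)
  ultimately have "P + u *\<^sub>R d \<in> closed_segment (P + t1 *\<^sub>R d) (P + t2 *\<^sub>R d) \<longleftrightarrow>
      u \<in> closed_segment t1 t2"
    by (metis (no_types, lifting) image_iff injD)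
  then show ?thesis
    by (auto simp: closed_segment_eq_real_ivl)
qed

lemma line_point_in_open_segment_iff:
  fixes P d :: "'a::real_vector"
  assumes "d \<noteq> 0"
  shows "P + u *\<^sub>R d \<in> open_segment (P + t1 *\<^sub>R d) (P + t2 *\<^sub>R d) \<longleftrightarrow>
         t1 < u \<and> u < t2 \<or> t2 < u \<and> u < t1"
  using line_point_in_closed_segment_iff[OF assms, of P u t1 t2] assms
  by (auto simp: open_segment_def)

lemma proj_add: "proj (a + b) = proj a + proj b"
  by (simp add: proj_def)

lemma proj_diff: "proj (a - b) = proj a - proj b"
  by (simp add: proj_def)

lemma proj_scaleR: "proj (c *\<^sub>R a) = c *\<^sub>R proj a"
  by (simp add: proj_def)

lemma continuous_on_proj: "continuous_on A proj"
  unfolding proj_def by (intro continuous_intros)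

lemma proj_in_both_images: "p \<in> s \<Longrightarrow> q \<in> t \<Longrightarrow> proj p = proj q \<Longrightarrow> proj p \<in> proj ` s \<inter> proj ` t"
  by (simp add: rev_image_eqI)

definition seg_ends :: "point3 set \<Rightarrow> point3 \<times> point3" where
  "seg_ends s = (SOME (a, b). s = closed_segment a b \<and> proj a \<noteq> proj b)"

definition seg_start :: "point3 set \<Rightarrow> point3" where
  "seg_start s = fst (seg_ends s)"

definition seg_end :: "point3 set \<Rightarrow> point3" where
  "seg_end s = snd (seg_ends s)"

definition seg_dir :: "point3 set \<Rightarrow> point2" where
  "seg_dir s = proj (seg_end s) - proj (seg_start s)"

text \<open>For \<open>x\<close> on the projection of \<open>s\<close>, \<open>seg_lift s x\<close> is the point of \<open>s\<close> above \<open>x\<close> and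
  \<open>seg_coord s x\<close> its position along \<open>s\<close> (\<open>0\<close> at \<open>seg_start s\<close>, \<open>1\<close> at \<open>seg_end s\<close>).\<close>

definition seg_coord :: "point3 set \<Rightarrow> point2 \<Rightarrow> real" where
  "seg_coord s x = ((x - proj (seg_start s)) \<bullet> seg_dir s) / (seg_dir s \<bullet> seg_dir s)"

definition seg_lift :: "point3 set \<Rightarrow> point2 \<Rightarrow> point3" where
  "seg_lift s x = seg_start s + seg_coord s x *\<^sub>R (seg_end s - seg_start s)"

lemma continuous_on_seg_coord: "continuous_on A (seg_coord s)"
  unfolding seg_coord_def divide_inverse by (intro continuous_intros)

context
  fixes s :: "point3 set"
  assumes nonvertical: "nonvertical_segment s"
begin

lemma seg_ends: "s = closed_segment (seg_start s) (seg_end s)" "seg_dir s \<noteq> 0"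
proof -
  obtain a b where "s = closed_segment a b" "proj a \<noteq> proj b"
    using nonvertical unfolding nonvertical_segment_def by blast
  then have "\<exists>ab. case ab of (a, b) \<Rightarrow> s = closed_segment a b \<and> proj a \<noteq> proj b"
    by (intro exI[of _ "(a, b)"]) simp
  from someI_ex[OF this] show "s = closed_segment (seg_start s) (seg_end s)" "seg_dir s \<noteq> 0"
    unfolding seg_start_def seg_end_def seg_ends_def seg_dir_def by (auto split: prod.splits)
qed

lemma convex_segment: "convex s"
  by (subst seg_ends(1)) (rule convex_closed_segment)

lemma proj_seg_point:
  "proj (seg_start s + u *\<^sub>R (seg_end s - seg_start s)) = proj (seg_start s) + u *\<^sub>R seg_dir s"
  by (simp add: proj_add proj_scaleR proj_diff seg_dir_def)

lemma seg_coord_seg_point: "seg_coord s (proj (seg_start s) + u *\<^sub>R seg_dir s) = u"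
  using seg_ends(2) by (simp add: seg_coord_def)

lemma seg_lift_proj:
  assumes "p \<in> s"
  shows "seg_lift s (proj p) = p"
proof -
  obtain u where "p = (1 - u) *\<^sub>R seg_start s + u *\<^sub>R seg_end s"
    using assms seg_ends(1) in_segment(1) by blast
  then have "p = seg_start s + u *\<^sub>R (seg_end s - seg_start s)"
    by (simp add: algebra_simps)
  then show ?thesis
    using proj_seg_point seg_coord_seg_point by (simp add: seg_lift_def)
qed

lemma proj_seg_lift:
  assumes "x \<in> proj ` s"
  shows "proj (seg_lift s x) = x" "seg_lift s x \<in> s"
  using assms seg_lift_proj by auto

lemma proj_eq_seg_point:
  assumes "x \<in> proj ` s"
  shows "x = proj (seg_start s) + seg_coord s x *\<^sub>R seg_dir s"
  by (metis assms proj_seg_lift(1) proj_seg_point seg_lift_def)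

lemma seg_coord_inj:
  assumes "x \<in> proj ` s" "y \<in> proj ` s" "seg_coord s x = seg_coord s y"
  shows "x = y"
  by (metis assms proj_eq_seg_point)

lemma inj_on_proj_segment: "inj_on proj s"
  by (metis inj_onI seg_lift_proj)

lemma open_segment_iff_seg_coord:
  assumes "x \<in> proj ` s" "y \<in> proj ` s" "z \<in> proj ` s"
  shows "z \<in> open_segment x y \<longleftrightarrow>
    seg_coord s x < seg_coord s z \<and> seg_coord s z < seg_coord s y \<or>
    seg_coord s y < seg_coord s z \<and> seg_coord s z < seg_coord s x"
  using line_point_in_open_segment_iff[OF seg_ends(2), of "proj (seg_start s)"]
    proj_eq_seg_point assms by metis

lemma closed_segment_iff_seg_coord:
  assumes "p \<in> s" "q \<in> s" "r \<in> s"
  shows "r \<in> closed_segment p q \<longleftrightarrow>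
    seg_coord s (proj p) \<le> seg_coord s (proj r) \<and> seg_coord s (proj r) \<le> seg_coord s (proj q) \<or>
    seg_coord s (proj q) \<le> seg_coord s (proj r) \<and> seg_coord s (proj r) \<le> seg_coord s (proj p)"
proof -
  have "seg_end s - seg_start s \<noteq> 0"
    using seg_ends(2) by (auto simp: seg_dir_def)
  from line_point_in_closed_segment_iff[OF this, of "seg_start s"] show ?thesis
    using seg_lift_proj assms unfolding seg_lift_def by metis
qed

end

section \<open>Simple cycles, monotone chains and mixed cycles\<close>

lemma simple_cycle_of_trancl:
  assumes "(a, a) \<in> r\<^sup>+"
  shows "\<exists>f n. 0 < n \<and> f n = f 0 \<and> (\<forall>i<n. (f i, f (Suc i)) \<in> r) \<and> inj_on f {..<n}"
proof -
  let ?closed = "\<lambda>n. 0 < n \<and> (\<exists>b. (b, b) \<in> r ^^ n)"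
  obtain n0 where "?closed n0"
    using assms by (auto simp: trancl_power)
  define n where "n = (LEAST n. ?closed n)"
  have "?closed n"
    unfolding n_def by (rule LeastI) fact
  then obtain f where f: "0 < n" "f n = f 0" "\<forall>i<n. (f i, f (Suc i)) \<in> r"
    unfolding relpow_fun_conv by auto
  have False if "i < j" "j < n" "f i = f j" for i j
  proof -
    have "(f i, f i) \<in> r ^^ (j - i)"
      unfolding relpow_fun_conv
      by (intro exI[of _ "\<lambda>k. f (i + k)"]) (use that f in auto)
    then have "n \<le> j - i"
      unfolding n_def using that by (intro Least_le) auto
    then show False
      using that by simp
  qed
  then have "inj_on f {..<n}"
    by (metis inj_onI lessThan_iff linorder_neqE_nat)
  with f show ?thesis
    by blast
qed

lemma chain_between:
  fixes g :: "'a \<Rightarrow> 'b::linorder"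
  assumes "finite I" "inj_on g I" "a \<in> I" "b \<in> I" "g a \<le> g b"
  shows "\<exists>xs. xs \<noteq> [] \<and> hd xs = a \<and> last xs = b \<and> distinct xs \<and>
    set xs \<subseteq> {x \<in> I. g a \<le> g x \<and> g x \<le> g b} \<and>
    successively (\<lambda>x y. g x < g y \<and> (\<forall>z\<in>I. \<not> (g x < g z \<and> g z < g y))) xs"
  using assms(4,5)
proof (induction "card {z \<in> I. g a \<le> g z \<and> g z < g b}" arbitrary: b rule: less_induct)
  case less
  let ?below = "{z \<in> I. g a \<le> g z \<and> g z < g b}"
  show ?case
  proof (cases "g a = g b")
    case True
    then have "a = b"
      using assms(2,3) less.prems(1) by (auto dest: inj_onD)
    then show ?thesis
      using assms(3) by (intro exI[of _ "[a]"]) auto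
  next
    case False
    have "finite ?below" "a \<in> ?below"
      using assms(1,3) False less.prems(2) by auto
    then have "Max (g ` ?below) \<in> g ` ?below"
      by (intro Max_in) auto
    then obtain m where m: "m \<in> ?below" and m_Max: "g m = Max (g ` ?below)"
      by auto
    have m_max: "g z \<le> g m" if "z \<in> ?below" for z
      using m_Max Max_ge[of "g ` ?below" "g z"] \<open>finite ?below\<close> that by simp
    have "{z \<in> I. g a \<le> g z \<and> g z < g m} \<subset> ?below"
      using m by (auto intro: less_trans)
    then have "card {z \<in> I. g a \<le> g z \<and> g z < g m} < card ?below"
      using \<open>finite ?below\<close> psubset_card_mono by blast
    then obtain xs where xs: "xs \<noteq> []" "hd xs = a" "last xs = m" "distinct xs"
      "set xs \<subseteq> {x \<in> I. g a \<le> g x \<and> g x \<le> g m}"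
      "successively (\<lambda>x y. g x < g y \<and> (\<forall>z\<in>I. \<not> (g x < g z \<and> g z < g y))) xs"
      using less.hyps[of m] m by auto
    have "\<not> (g m < g z \<and> g z < g b)" if "z \<in> I" for z
    proof
      assume "g m < g z \<and> g z < g b"
      moreover have "g a \<le> g m"
        using m(1) by simp
      ultimately show False
        using m_max[of z] that by (auto dest: leD intro: order.trans less_imp_le)
    qed
    moreover have "b \<notin> set xs"
      using xs(5) m(1) by fastforce
    ultimately show ?thesis
      using xs m(1) less.prems
      by (intro exI[of _ "xs @ [b]"]) (auto simp: successively_append_iff)
  qed
qed

lemma Suc_Suc_mod_neq:
  fixes i n :: nat
  assumes "n \<ge> 3" "i < n"
  shows "Suc (Suc i) mod n \<noteq> i"
  using assms by (auto simp: mod_if split: if_splits)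

lemma mixed_cycle_step:
  assumes "mixed_cycle V E A v l" "i < l - 1"
  shows "(v i, v (Suc i)) \<in> A \<or> {v i, v (Suc i)} \<in> E"
  using assms unfolding mixed_cycle_def by (metis Suc_eq_plus1)

lemma has_mixed_cycle_if_closed_walk:
  assumes "distinct xs" "length xs \<ge> 3" "set xs \<subseteq> V"
    and walk: "successively (\<lambda>u w. (u, w) \<in> A \<or> {u, w} \<in> E) (xs @ [hd xs])"
  shows "has_mixed_cycle V E A"
proof -
  define n where "n = length xs"
  define v where "v i = xs ! (i mod n)" for i
  have n: "n \<ge> 3"
    using assms(2) n_def by simp
  then have mod_less: "i mod n < length xs" for i
    unfolding n_def by (intro mod_less_divisor) linarith
  have v_eq_iff: "v i = v j \<longleftrightarrow> i mod n = j mod n" for i j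
    using assms(1) mod_less unfolding v_def by (simp add: nth_eq_iff_index_eq)
  have snoc_nth: "(xs @ [hd xs]) ! i = v i" if "i \<le> n" for i
  proof (cases "i = n")
    case True
    moreover have "xs \<noteq> []"
      using n n_def by auto
    ultimately show ?thesis
      unfolding v_def n_def by (simp add: hd_conv_nth)
  next
    case False
    with that show ?thesis
      unfolding v_def n_def by (simp add: nth_append_left)
  qed
  have step: "(v i, v (i + 1)) \<in> A \<or> {v i, v (i + 1)} \<in> E" if "i < n" for i
  proof -
    have "Suc i < length (xs @ [hd xs])"
      using that n_def by simp
    with walk have "((xs @ [hd xs]) ! i, (xs @ [hd xs]) ! Suc i) \<in> A \<or>
        {(xs @ [hd xs]) ! i, (xs @ [hd xs]) ! Suc i} \<in> E"
      unfolding successively_conv_nth by blast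
    then show ?thesis
      using snoc_nth[of i] snoc_nth[of "Suc i"] that by simp
  qed
  have distinct_edges: "{v i, v (i + 1)} \<noteq> {v j, v (j + 1)}" if "i < n" "j < n" "i \<noteq> j" for i j
  proof
    assume "{v i, v (i + 1)} = {v j, v (j + 1)}"
    with that v_eq_iff have i: "i = Suc j mod n" and j: "Suc i mod n = j"
      by (auto simp: doubleton_eq_iff)
    have "Suc (Suc i) mod n = i"
      by (subst (2) i, subst j[symmetric]) (simp add: mod_Suc_eq)
    with that(1) n show False
      by (simp add: Suc_Suc_mod_neq)
  qed
  have "mixed_cycle V E A v (n + 1)"
    unfolding mixed_cycle_def
  proof (intro conjI exI[of _ "\<lambda>i. (v i, v (i + 1)) \<in> A"] allI impI)
    show "v i \<in> V" for i
      using assms(3) mod_less unfolding v_def by auto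
  qed (use n step distinct_edges v_eq_iff in auto)
  then show ?thesis
    unfolding has_mixed_cycle_def by blast
qed

lemma has_mixed_cycle_of_blocks:
  assumes n: "n \<ge> 3"
    and blocks: "\<And>i. i < n \<Longrightarrow> ps i \<noteq> [] \<and> distinct (ps i) \<and> set (ps i) \<subseteq> V \<and>
      successively (\<lambda>u w. {u, w} \<in> E) (ps i)"
    and disjoint: "\<And>i j. i < n \<Longrightarrow> j < n \<Longrightarrow> i \<noteq> j \<Longrightarrow> set (ps i) \<inter> set (ps j) = {}"
    and arcs: "\<And>i. i < n \<Longrightarrow> (last (ps i), hd (ps (Suc i mod n))) \<in> A"
  shows "has_mixed_cycle V E A"
proof -
  let ?step = "\<lambda>u w. (u, w) \<in> A \<or> {u, w} \<in> E"
  let ?xs = "\<lambda>m. concat (map ps [0..<m])"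
  have prefix: "successively ?step (?xs m) \<and> distinct (?xs m) \<and> length (?xs m) \<ge> m \<and>
      set (?xs m) \<subseteq> V \<and> (0 < m \<longrightarrow> last (?xs m) = last (ps (m - 1)))" if "m \<le> n" for m
    using that
  proof (induction m)
    case (Suc m)
    have block: "ps m \<noteq> []" "distinct (ps m)" "set (ps m) \<subseteq> V" "successively ?step (ps m)"
      using blocks[of m] Suc.prems by (auto elim: successively_mono)
    have "set (ps i) \<inter> set (ps m) = {}" if "i < m" for i
      using disjoint[of i m] that Suc.prems by simp
    then have "set (?xs m) \<inter> set (ps m) = {}"
      by fastforce
    moreover have "?step (last (?xs m)) (hd (ps m))" if "?xs m \<noteq> []"
    proof -
      have "0 < m"
        using that by (cases m) auto
      then show ?thesis
        using Suc arcs[of "m - 1"] by simp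
    qed
    moreover have "length (ps m) > 0"
      using block(1) by simp
    ultimately show ?case
      using Suc block by (auto simp: successively_append_iff simp del: length_greater_0_conv)
  qed simp
  define xs where "xs = ?xs n"
  have "hd xs = hd (ps 0)"
    using blocks[of 0] n unfolding xs_def by (simp add: upt_conv_Cons)
  then have "?step (last xs) (hd xs)"
    using prefix[of n] arcs[of "n - 1"] n unfolding xs_def by simp
  then have "successively ?step (xs @ [hd xs])"
    using prefix[of n] n unfolding xs_def by (auto simp: successively_append_iff)
  with prefix[of n] n show ?thesis
    unfolding xs_def by (intro has_mixed_cycle_if_closed_walk) auto
qed

lemma walk_in_trancl_image:
  assumes steps: "\<And>i. i < n \<Longrightarrow> (v i, v (Suc i)) \<in> A \<or> {v i, v (Suc i)} \<in> E"
    and arc_image: "\<And>u w. (u, w) \<in> A \<Longrightarrow> (f u, f w) \<in> R"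
    and edge_image: "\<And>u w. {u, w} \<in> E \<Longrightarrow> f u = f w"
    and arc: "i < n" "(v i, v (Suc i)) \<in> A"
  shows "(f (v 0), f (v n)) \<in> R\<^sup>+"
proof -
  have walk: "(f (v a), f (v b)) \<in> R\<^sup>*" if "a \<le> b" "b \<le> n" for a b
    using that
  proof (induction b)
    case (Suc b)
    show ?case
    proof (cases "a = Suc b")
      case False
      with Suc have "(f (v a), f (v b)) \<in> R\<^sup>*"
        by simp
      moreover have "(f (v b), f (v (Suc b))) \<in> R\<^sup>="
        using steps[of b] Suc.prems arc_image edge_image by auto
      ultimately show ?thesis
        by (metis Un_iff pair_in_Id_conv rtrancl.rtrancl_into_rtrancl)
    qed simp
  qed simp
  have "(f (v i), f (v (Suc i))) \<in> R"
    using arc arc_image by simp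
  then have "(f (v 0), f (v (Suc i))) \<in> R\<^sup>+"
    using walk[of 0 i] arc(1) by (simp add: rtrancl_into_trancl1)
  then show ?thesis
    using walk[of "Suc i" n] arc(1) by (simp add: trancl_rtrancl_trancl)
qed

lemma no_mixed_cycle_without_arcs:
  fixes g :: "'v \<Rightarrow> 'a::linorder"
  assumes cycle: "mixed_cycle V E A v l"
    and no_arcs: "\<And>i. i < l - 1 \<Longrightarrow> (v i, v (Suc i)) \<notin> A"
    and edge_g: "\<And>u w. {u, w} \<in> E \<Longrightarrow> g u \<noteq> g w"
    and lower_unique: "\<And>u w w'. {u, w} \<in> E \<Longrightarrow> {u, w'} \<in> E \<Longrightarrow> g w < g u \<Longrightarrow> g w' < g u \<Longrightarrow> w = w'"
  shows False
proof -
  define n where "n = l - 1"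
  have n: "n \<ge> 2" and closed: "v n = v 0"
    using cycle unfolding mixed_cycle_def n_def by auto
  obtain ua where
    steps: "\<forall>i<n. (ua i \<longrightarrow> (v i, v (i + 1)) \<in> A) \<and> (\<not> ua i \<longrightarrow> {v i, v (i + 1)} \<in> E)"
    and distinct_edges: "\<forall>i j. i < n \<and> j < n \<and> i \<noteq> j \<and> \<not> ua i \<and> \<not> ua j \<longrightarrow>
      {v i, v (i + 1)} \<noteq> {v j, v (j + 1)}"
    using cycle unfolding mixed_cycle_def n_def by blast
  have not_ua: "\<not> ua i" if "i < n" for i
    using steps no_arcs[of i] that n_def by auto
  have edge: "{v i, v (Suc i)} \<in> E" if "i < n" for i
    using steps not_ua[OF that] that by simp
  \<comment> \<open>The vertex maximising \<open>g\<close> has both cycle neighbours below it, so they coincide.\<close>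
  have "Max (g ` v ` {..<n}) \<in> g ` v ` {..<n}"
    using n by (intro Max_in) (auto simp: lessThan_empty_iff)
  then obtain j where j: "j < n" "g (v j) = Max (g ` v ` {..<n})"
    by auto
  have j_max: "g (v i) \<le> g (v j)" if "i \<le> n" for i
  proof (cases "i = n")
    case True
    then show ?thesis
      using j closed n by (simp add: image_image)
  qed (use j that in \<open>simp add: image_image\<close>)
  define j' where "j' = (if j = 0 then n - 1 else j - 1)"
  have j': "j' < n" "j' \<noteq> j" "v (Suc j') = v j"
    using j n closed unfolding j'_def by auto
  have "g (v (Suc j)) < g (v j)"
    using j_max[of "Suc j"] edge_g[OF edge[OF j(1)]] j(1) by fastforce
  moreover have "g (v j') < g (v j)"
    using j_max[of j'] edge_g[OF edge[OF j'(1)]] j' by fastforce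
  moreover have "{v j, v j'} \<in> E"
    using edge[OF j'(1)] j'(3) by (simp add: insert_commute)
  ultimately have "v (Suc j) = v j'"
    using lower_unique edge[OF j(1)] by blast
  moreover have "{v j, v (Suc j)} \<noteq> {v j', v (Suc j')}"
    using distinct_edges[rule_format, of j j'] j'(1,2) j(1) not_ua by simp
  ultimately show False
    using j'(3) by (simp add: insert_commute)
qed

section \<open>Depth cycles and the graph \<open>G_S\<close>\<close>

definition above_on :: "point3 set set \<Rightarrow> (point3 set \<times> point3 set) set" where
  "above_on T = {(P, Q). P \<in> T \<and> Q \<in> T \<and> above P Q}"

lemma has_depth_cycle_iff_trancl: "has_depth_cycle T \<longleftrightarrow> (\<exists>P. (P, P) \<in> (above_on T)\<^sup>+)"
proof
  assume "has_depth_cycle T"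
  then obtain f and p :: nat where f: "p \<ge> 2" "\<forall>i<p. f i \<in> T"
    "\<forall>i. i + 1 < p \<longrightarrow> above (f i) (f (i + 1))" "f (p - 1) = f 0"
    unfolding has_depth_cycle_def by blast
  have "(f 0, f 0) \<in> above_on T ^^ (p - 1)"
    unfolding relpow_fun_conv using f by (intro exI[of _ f]) (auto simp: above_on_def)
  with f(1) show "\<exists>P. (P, P) \<in> (above_on T)\<^sup>+"
    unfolding trancl_power by (intro exI[of _ "f 0"] exI[of _ "p - 1"]) auto
next
  assume "\<exists>P. (P, P) \<in> (above_on T)\<^sup>+"
  then obtain n f where f: "0 < n" "f n = f 0" "\<forall>i<n. (f i, f (Suc i)) \<in> above_on T"
    unfolding trancl_power relpow_fun_conv by auto
  then have "f i \<in> T" if "i < n + 1" for i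
  proof (cases "i < n")
    case False
    with that have "f i = f 0"
      using f(2) by (simp add: less_Suc_eq)
    with f(1,3) show ?thesis
      by (auto simp: above_on_def)
  qed (use f(3) in \<open>auto simp: above_on_def\<close>)
  with f show "has_depth_cycle T"
    unfolding has_depth_cycle_def above_on_def
    by (intro exI[of _ f] exI[of _ "n + 1"]) auto
qed

definition piece_path :: "point3 set set \<Rightarrow> point3 set \<Rightarrow> point3 set \<Rightarrow> point2 \<Rightarrow> point2 \<Rightarrow>
    (point3 set \<times> point2) list \<Rightarrow> bool" where
  "piece_path S P s x y ys \<longleftrightarrow> ys \<noteq> [] \<and> hd ys = (s, x) \<and> last ys = (s, y) \<and> distinct ys \<and>
     set ys \<subseteq> {(s, z) | z. z \<in> Ipts S s \<and> seg_lift s z \<in> P} \<and>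
     successively (\<lambda>u w. {u, w} \<in> GS_E S) ys"

fun piece_of :: "point3 set \<Rightarrow> point3 set \<times> point2 \<Rightarrow> point3 set" where
  "piece_of C (s, x) = connected_component_set (s - C) (seg_lift s x)"

text \<open>A cut \<open>c\<close> on \<open>s\<close> is charged to the last vertex of \<open>s\<close> at or before \<open>c\<close> along \<open>s\<close>.
  Different vertices receive different cuts, and an edge whose lifted segment contains a cut has a
  charged endpoint.\<close>

fun charges :: "point3 set set \<Rightarrow> point3 \<Rightarrow> point3 set \<times> point2 \<Rightarrow> bool" where
  "charges S c (s, x) \<longleftrightarrow> c \<in> s \<and> seg_coord s x \<le> seg_coord s (proj c) \<and>
     (\<forall>z\<in>Ipts S s. seg_coord s x < seg_coord s z \<longrightarrow> seg_coord s (proj c) < seg_coord s z)"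

definition charged_vertices :: "point3 set set \<Rightarrow> point3 set \<Rightarrow> (point3 set \<times> point2) set" where
  "charged_vertices S C = {v \<in> GS_V S. \<exists>c\<in>C. charges S c v}"

locale segment_arrangement =
  fixes S :: "point3 set set"
  assumes finite_segments: "finite S"
    and nonvertical: "s \<in> S \<Longrightarrow> nonvertical_segment s"
    and general_position: "general_position S"
begin

lemma segments_disjoint: "s \<in> S \<Longrightarrow> t \<in> S \<Longrightarrow> p \<in> s \<Longrightarrow> p \<in> t \<Longrightarrow> s = t"
  using conjunct1[OF general_position[unfolded general_position_def]] by blast

lemma crossing_unique:
  assumes "s \<in> S" "t \<in> S" "s \<noteq> t" "x \<in> proj ` s \<inter> proj ` t" "y \<in> proj ` s \<inter> proj ` t"
  shows "x = y"
  using conjunct1[OF conjunct2[OF general_position[unfolded general_position_def]]] assms by blast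

lemma Ipts_subset: "Ipts S s \<subseteq> proj ` s"
  unfolding Ipts_def by blast

lemma finite_Ipts:
  assumes "s \<in> S"
  shows "finite (Ipts S s)"
proof -
  have "finite (proj ` s \<inter> proj ` t)" if "t \<in> S - {s}" for t
  proof (cases "proj ` s \<inter> proj ` t = {}")
    case False
    then obtain x where "x \<in> proj ` s \<inter> proj ` t"
      by blast
    then have "proj ` s \<inter> proj ` t \<subseteq> {x}"
      using crossing_unique[of s t] assms that by blast
    then show ?thesis
      using finite_subset by blast
  qed simp
  moreover have "Ipts S s \<subseteq> (\<Union>t\<in>S - {s}. proj ` s \<inter> proj ` t)"
    unfolding Ipts_def by blast
  ultimately show ?thesis
    using finite_segments by (meson finite_Diff finite_UN_I finite_subset)
qed

lemma finite_GS_V: "finite (GS_V S)"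
proof -
  have "GS_V S = Sigma S (Ipts S)"
    unfolding GS_V_def by auto
  then show ?thesis
    using finite_segments finite_Ipts by simp
qed

lemma inj_on_seg_coord_Ipts: "s \<in> S \<Longrightarrow> inj_on (seg_coord s) (Ipts S s)"
  using seg_coord_inj[OF nonvertical] Ipts_subset by (meson inj_onI subsetD)

lemma seg_lift_in_segment: "s \<in> S \<Longrightarrow> x \<in> Ipts S s \<Longrightarrow> seg_lift s x \<in> s"
  using proj_seg_lift(2)[OF nonvertical] Ipts_subset by blast

lemma GS_E_edge:
  assumes "{u, w} \<in> GS_E S"
  obtains s x y where "u = (s, x)" "w = (s, y)" "s \<in> S" "x \<in> Ipts S s" "y \<in> Ipts S s" "x \<noteq> y"
    "\<forall>z\<in>Ipts S s. z \<notin> open_segment x y"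
proof -
  obtain s x y where "{u, w} = {(s, x), (s, y)}" "s \<in> S" "x \<in> Ipts S s" "y \<in> Ipts S s" "x \<noteq> y"
    "\<forall>z\<in>Ipts S s. z \<notin> open_segment x y"
    using assms unfolding GS_E_def by blast
  then show ?thesis
    using that[of s x y] that[of s y x] by (auto simp: doubleton_eq_iff open_segment_commute)
qed

lemma GS_E_vertices:
  assumes "{u, w} \<in> GS_E S"
  shows "u \<in> GS_V S" "w \<in> GS_V S"
  using GS_E_edge[OF assms] unfolding GS_V_def by (metis (mono_tags, lifting) case_prod_conv
      mem_Collect_eq)+

lemma GS_E_if_consecutive:
  assumes "s \<in> S" "x \<in> Ipts S s" "y \<in> Ipts S s" "seg_coord s x < seg_coord s y"
    and "\<forall>z\<in>Ipts S s. \<not> (seg_coord s x < seg_coord s z \<and> seg_coord s z < seg_coord s y)"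
  shows "{(s, x), (s, y)} \<in> GS_E S"
proof -
  have "z \<notin> open_segment x y" if "z \<in> Ipts S s" for z
  proof -
    have "x \<in> proj ` s" "y \<in> proj ` s" "z \<in> proj ` s"
      using Ipts_subset assms(2,3) that by blast+
    then show ?thesis
      using assms(4,5) that open_segment_iff_seg_coord[OF nonvertical[OF assms(1)], of x y z] by auto
  qed
  moreover have "x \<noteq> y"
    using assms(4) by auto
  ultimately show ?thesis
    using assms(1-3) unfolding GS_E_def by blast
qed

lemma GS_E_consecutive:
  assumes "{(s, x), (s, y)} \<in> GS_E S" "z \<in> Ipts S s"
  shows "x \<noteq> y" "\<not> (seg_coord s x < seg_coord s z \<and> seg_coord s z < seg_coord s y)"
proof -
  obtain s' x' y' where e: "(s, x) = (s', x')" "(s, y) = (s', y')" "s' \<in> S" "x' \<in> Ipts S s'"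
    "y' \<in> Ipts S s'" "x' \<noteq> y'" "\<forall>z\<in>Ipts S s'. z \<notin> open_segment x' y'"
    using GS_E_edge[OF assms(1)] by blast
  then have e': "s \<in> S" "x \<in> Ipts S s" "y \<in> Ipts S s" "x \<noteq> y" "z \<notin> open_segment x y"
    using assms(2) by auto
  then show "x \<noteq> y"
    by simp
  have "x \<in> proj ` s" "y \<in> proj ` s" "z \<in> proj ` s"
    using e'(2,3) assms(2) Ipts_subset by blast+
  then show "\<not> (seg_coord s x < seg_coord s z \<and> seg_coord s z < seg_coord s y)"
    using e'(5) open_segment_iff_seg_coord[OF nonvertical[OF e'(1)]] by blast
qed

lemma GS_E_seg_coord_neq:
  assumes "{u, w} \<in> GS_E S"
  shows "seg_coord (fst u) (snd u) \<noteq> seg_coord (fst w) (snd w)"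
proof -
  obtain s x y where uw: "u = (s, x)" "w = (s, y)" and s: "s \<in> S"
    and xy: "x \<in> Ipts S s" "y \<in> Ipts S s" "x \<noteq> y"
    using GS_E_edge[OF assms] by blast
  then show ?thesis
    using inj_on_eq_iff[OF inj_on_seg_coord_Ipts[OF s] xy(1,2)] by simp
qed

lemma GS_E_unique_lower:
  assumes "{u, w} \<in> GS_E S" "{u, w'} \<in> GS_E S"
    and "seg_coord (fst w) (snd w) < seg_coord (fst u) (snd u)"
    and "seg_coord (fst w') (snd w') < seg_coord (fst u) (snd u)"
  shows "w = w'"
proof -
  obtain s x y where uw: "u = (s, x)" "w = (s, y)" "s \<in> S" "y \<in> Ipts S s"
    using GS_E_edge[OF assms(1)] by blast
  obtain s' x' y' where uw': "u = (s', x')" "w' = (s', y')" "y' \<in> Ipts S s'"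
    using GS_E_edge[OF assms(2)] by blast
  have e: "{(s, y), (s, x)} \<in> GS_E S" "{(s, y'), (s, x)} \<in> GS_E S"
    using assms(1,2) uw uw' by (simp_all add: insert_commute)
  have "\<not> seg_coord s y < seg_coord s y'" "\<not> seg_coord s y' < seg_coord s y"
    using GS_E_consecutive(2)[OF e(1), of y'] GS_E_consecutive(2)[OF e(2), of y] assms(3,4) uw uw'
    by auto
  then show ?thesis
    using uw uw' inj_on_seg_coord_Ipts[OF uw(3)] by (simp add: inj_on_eq_iff)
qed

lemma mem_GS_A_iff:
  "((s, x), (t, y)) \<in> GS_A S \<longleftrightarrow>
    x = y \<and> s \<in> S \<and> t \<in> S \<and> s \<noteq> t \<and> above s t \<and> x \<in> proj ` s \<inter> proj ` t"
  unfolding GS_A_def by (cases x) auto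

lemma GS_A_vertices: "((s, x), (t, y)) \<in> GS_A S \<Longrightarrow> (s, x) \<in> GS_V S \<and> (t, y) \<in> GS_V S"
  unfolding mem_GS_A_iff GS_V_def Ipts_def by auto

lemma above_segments_at_crossing:
  assumes "s \<in> S" "t \<in> S" "s \<noteq> t" "x \<in> proj ` s \<inter> proj ` t" "above s t"
  shows "zc (seg_lift s x) > zc (seg_lift t x)"
proof -
  obtain p q where pq: "p \<in> s" "q \<in> t" "proj p = proj q" "zc p > zc q"
    using assms(5) unfolding above_def by blast
  then have "proj p \<in> proj ` s \<inter> proj ` t"
    by (intro proj_in_both_images)
  then have "proj p = x"
    using crossing_unique[OF assms(1-3) _ assms(4)] by blast
  moreover have "seg_lift s (proj p) = p" "seg_lift t (proj q) = q"
    using seg_lift_proj nonvertical assms(1,2) pq(1,2) by blast+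
  ultimately show ?thesis
    using pq(3,4) by simp
qed

lemma not_above_within_segment:
  assumes "s \<in> S" "P \<subseteq> s" "Q \<subseteq> s"
  shows "\<not> above P Q"
proof
  assume "above P Q"
  then obtain p q where "p \<in> P" "q \<in> Q" "proj p = proj q" "zc p > zc q"
    unfolding above_def by blast
  moreover have "inj_on proj s"
    using inj_on_proj_segment nonvertical assms(1) by blast
  moreover have "p \<in> s" "q \<in> s"
    using calculation(1,2) assms(2,3) by blast+
  ultimately have "p = q"
    by (simp add: inj_on_eq_iff)
  with \<open>zc p > zc q\<close> show False
    by simp
qed

lemma above_pieces_asym:
  assumes "s \<in> S" "t \<in> S" "P \<subseteq> s" "Q \<subseteq> t" "above P Q"
  shows "\<not> above Q P"
proof
  assume "above Q P"
  have "above s t" "above t s"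
    using assms \<open>above Q P\<close> unfolding above_def by blast+
  moreover have "s \<noteq> t"
    using not_above_within_segment assms by blast
  moreover obtain x where "x \<in> proj ` s \<inter> proj ` t"
  proof -
    obtain p q where "p \<in> s" "q \<in> t" "proj p = proj q"
      using \<open>above s t\<close> unfolding above_def by blast
    then show ?thesis
      using that proj_in_both_images by blast
  qed
  ultimately show False
    using above_segments_at_crossing[of s t x] above_segments_at_crossing[of t s x] assms(1,2)
    by (simp add: Int_commute)
qed

lemma arc_of_above_pieces:
  assumes "s \<in> S" "t \<in> S" "P \<subseteq> s" "Q \<subseteq> t" "above P Q"
  obtains x where "((s, x), (t, x)) \<in> GS_A S" "seg_lift s x \<in> P" "seg_lift t x \<in> Q"
proof -
  obtain p q where pq: "p \<in> P" "q \<in> Q" "proj p = proj q" "zc p > zc q"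
    using assms(5) unfolding above_def by blast
  have "s \<noteq> t"
    using not_above_within_segment assms by blast
  moreover have "above s t"
    using pq assms(3,4) unfolding above_def by blast
  moreover have "p \<in> s" "q \<in> t"
    using pq assms(3,4) by blast+
  moreover from this have "seg_lift s (proj p) = p" "seg_lift t (proj q) = q"
    using seg_lift_proj nonvertical assms(1,2) by blast+
  moreover have "proj p \<in> proj ` s \<inter> proj ` t"
    using \<open>p \<in> s\<close> \<open>q \<in> t\<close> pq(3) by (rule proj_in_both_images)
  ultimately show ?thesis
    using that[of "proj p"] pq(1,2,3) assms(1,2) unfolding mem_GS_A_iff by simp
qed

lemma piece_owner:
  assumes "P \<in> pieces S C"
  obtains s where "s \<in> S" "P \<in> components (s - C)"
  using assms unfolding pieces_def by blast

lemma piece_in_segment: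
  assumes "P \<in> pieces S C"
  obtains s where "s \<in> S" "P \<subseteq> s"
  using assms in_components_subset by (metis Diff_subset order_trans piece_owner)

lemma pieces_eq_if_common_point:
  assumes "s \<in> S" "t \<in> S" "P \<in> components (s - C)" "Q \<in> components (t - C)" "p \<in> P" "p \<in> Q"
  shows "s = t" "P = Q"
proof -
  show "s = t"
    using assms segments_disjoint in_components_subset by blast
  then show "P = Q"
    using assms components_eq by blast
qed

lemma piece_between:
  assumes "s \<in> S" "P \<in> components (s - C)" "p \<in> P" "q \<in> P" "r \<in> s"
    and "seg_coord s (proj p) \<le> seg_coord s (proj r)" "seg_coord s (proj r) \<le> seg_coord s (proj q)"
  shows "r \<in> P"
proof -
  let ?g = "\<lambda>z. seg_coord s (proj z)"
  have "continuous_on P ?g"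
    using continuous_on_compose[OF continuous_on_proj continuous_on_seg_coord] by (simp add: o_def)
  then have "connected (?g ` P)"
    using connected_continuous_image in_components_connected assms(2) by blast
  then have "?g r \<in> ?g ` P"
    using connectedD_interval assms(3,4,6,7) by (meson imageI)
  then obtain r' where "r' \<in> P" "?g r' = ?g r"
    by auto
  moreover have "r' \<in> s"
    using \<open>r' \<in> P\<close> assms(2) in_components_subset by blast
  ultimately show ?thesis
    using assms(5) seg_lift_proj[OF nonvertical[OF assms(1)]] unfolding seg_lift_def by metis
qed

lemma same_component_if_segment_avoids:
  assumes "s \<in> S" "p \<in> s" "q \<in> s" "closed_segment p q \<inter> C = {}"
  shows "connected_component_set (s - C) p = connected_component_set (s - C) q"
proof -
  have "closed_segment p q \<subseteq> s - C"
    using closed_segment_subset[OF assms(2,3) convex_segment[OF nonvertical[OF assms(1)]]] assms(4)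
    by blast
  then have "q \<in> connected_component_set (s - C) p"
    using connected_component_maximal[of p "closed_segment p q" "s - C"] by auto
  then show ?thesis
    using connected_component_eq by blast
qed

subsection \<open>Cutting above a feedback vertex set\<close>

lemma piece_path_rev: "piece_path S P s x y ys \<Longrightarrow> piece_path S P s y x (rev ys)"
  unfolding piece_path_def by (auto simp: hd_rev last_rev insert_commute)

lemma piece_path_upward:
  assumes s: "s \<in> S" and P: "P \<in> components (s - C)"
    and a: "a \<in> Ipts S s" "seg_lift s a \<in> P" and b: "b \<in> Ipts S s" "seg_lift s b \<in> P"
    and le: "seg_coord s a \<le> seg_coord s b"
  shows "\<exists>ys. piece_path S P s a b ys"
proof -
  obtain zs where zs: "zs \<noteq> []" "hd zs = a" "last zs = b" "distinct zs"
    "set zs \<subseteq> {z \<in> Ipts S s. seg_coord s a \<le> seg_coord s z \<and> seg_coord s z \<le> seg_coord s b}"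
    "successively (\<lambda>z z'. seg_coord s z < seg_coord s z' \<and>
       (\<forall>w\<in>Ipts S s. \<not> (seg_coord s z < seg_coord s w \<and> seg_coord s w < seg_coord s z'))) zs"
    using chain_between[OF finite_Ipts[OF s] inj_on_seg_coord_Ipts[OF s] a(1) b(1) le] by blast
  have proj_lift: "proj (seg_lift s z) = z" if "z \<in> Ipts S s" for z
    using proj_seg_lift(1)[OF nonvertical[OF s]] Ipts_subset that by blast
  have "seg_lift s z \<in> P" if "z \<in> set zs" for z
  proof (rule piece_between[OF s P a(2) b(2)])
    have z: "z \<in> Ipts S s" "seg_coord s a \<le> seg_coord s z" "seg_coord s z \<le> seg_coord s b"
      using zs(5) that by auto
    then show "seg_lift s z \<in> s"
      using seg_lift_in_segment[OF s] by blast
    show "seg_coord s (proj (seg_lift s a)) \<le> seg_coord s (proj (seg_lift s z))"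
      "seg_coord s (proj (seg_lift s z)) \<le> seg_coord s (proj (seg_lift s b))"
      using z proj_lift[OF z(1)] proj_lift[OF a(1)] proj_lift[OF b(1)] by simp_all
  qed
  moreover have "successively (\<lambda>u w. {u, w} \<in> GS_E S) (map (Pair s) zs)"
    unfolding successively_map using zs(6)
    by (rule successively_mono) (use zs(5) GS_E_if_consecutive[OF s] in blast)
  ultimately have "piece_path S P s a b (map (Pair s) zs)"
    using zs unfolding piece_path_def by (auto simp: hd_map last_map distinct_map inj_on_def)
  then show ?thesis
    by blast
qed

lemma piece_path_exists:
  assumes "s \<in> S" "P \<in> components (s - C)"
    and "x \<in> Ipts S s" "seg_lift s x \<in> P" "y \<in> Ipts S s" "seg_lift s y \<in> P"
  shows "\<exists>ys. piece_path S P s x y ys"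
proof (cases "seg_coord s x \<le> seg_coord s y")
  case True
  then show ?thesis
    using piece_path_upward assms by blast
next
  case False
  then obtain ys where "piece_path S P s y x ys"
    using piece_path_upward[OF assms(1,2,5,6,3,4)] by fastforce
  then show ?thesis
    using piece_path_rev by blast
qed

lemma simple_depth_cycle_length:
  assumes "0 < n" "f n = f 0" "\<forall>i<n. (f i, f (Suc i)) \<in> above_on (pieces S C)"
  shows "n \<ge> 3"
proof (rule ccontr)
  assume "\<not> n \<ge> 3"
  with assms(1) have "n = 1 \<or> n = 2"
    by auto
  have step: "above (f i) (f (Suc i))" "f i \<in> pieces S C" if "i < n" for i
    using assms(3) that unfolding above_on_def by auto
  obtain s where s: "s \<in> S" "f 0 \<subseteq> s"
    using step(2)[OF assms(1)] piece_in_segment by blast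
  show False
  proof (cases "n = 1")
    case True
    then show False
      using step(1)[of 0] assms(2) not_above_within_segment[OF s(1) s(2) s(2)] by simp
  next
    case False
    with \<open>n = 1 \<or> n = 2\<close> have "n = 2"
      by simp
    obtain t where t: "t \<in> S" "f 1 \<subseteq> t"
      using step(2)[of 1] \<open>n = 2\<close> piece_in_segment by auto
    show False
      using above_pieces_asym[OF s(1) t(1) s(2) t(2)] step(1)[of 0] step(1)[of 1] assms(2) \<open>n = 2\<close>
      by (simp add: numeral_2_eq_2)
  qed
qed

lemma crossing_cycle_of_depth_cycle:
  assumes "has_depth_cycle (pieces S C)"
  obtains n F \<sigma> x where "n \<ge> 3" "inj_on F {..<n}" "\<And>i. F (i mod n) = F i" "\<And>i. \<sigma> (i mod n) = \<sigma> i"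
    "\<And>i. \<sigma> i \<in> S" "\<And>i. F i \<in> components (\<sigma> i - C)"
    "\<And>i. ((\<sigma> i, x i), (\<sigma> (Suc i), x i)) \<in> GS_A S"
    "\<And>i. seg_lift (\<sigma> i) (x i) \<in> F i" "\<And>i. seg_lift (\<sigma> (Suc i)) (x i) \<in> F (Suc i)"
proof -
  let ?T = "pieces S C"
  obtain f n where f: "0 < n" "f n = f 0" "\<forall>i<n. (f i, f (Suc i)) \<in> above_on ?T"
    and inj: "inj_on f {..<n}"
    using assms simple_cycle_of_trancl unfolding has_depth_cycle_iff_trancl by metis
  define F where "F i = f (i mod n)" for i
  have F_mod: "F (i mod n) = F i" for i
    unfolding F_def by simp
  have F_inj: "inj_on F {..<n}"
    using inj unfolding F_def by (simp add: inj_on_def)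
  have F_step: "(F i, F (Suc i)) \<in> above_on ?T" for i
  proof -
    have "f (Suc i mod n) = f (Suc (i mod n))"
      using f(2) by (auto simp: mod_Suc)
    then show ?thesis
      using f(1,3) unfolding F_def by simp
  qed
  then have F_piece: "F i \<in> ?T" "above (F i) (F (Suc i))" for i
    unfolding above_on_def by auto
  have "\<forall>P\<in>?T. \<exists>s. s \<in> S \<and> P \<in> components (s - C)"
    unfolding pieces_def by blast
  then obtain seg where seg: "\<And>P. P \<in> ?T \<Longrightarrow> seg P \<in> S \<and> P \<in> components (seg P - C)"
    by (auto dest!: bchoice)
  define \<sigma> where "\<sigma> i = seg (F i)" for i
  have \<sigma>: "\<sigma> i \<in> S" "F i \<in> components (\<sigma> i - C)" for i
    using seg F_piece(1) unfolding \<sigma>_def by blast+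
  have \<sigma>_mod: "\<sigma> (i mod n) = \<sigma> i" for i
    unfolding \<sigma>_def F_mod ..
  have F_sub: "F i \<subseteq> \<sigma> i" for i
    using \<sigma>(2) in_components_subset by blast
  have "\<exists>x. ((\<sigma> i, x), (\<sigma> (Suc i), x)) \<in> GS_A S \<and> seg_lift (\<sigma> i) x \<in> F i \<and>
      seg_lift (\<sigma> (Suc i)) x \<in> F (Suc i)" for i
    by (rule arc_of_above_pieces[OF \<sigma>(1) \<sigma>(1) F_sub F_sub F_piece(2)]) blast
  then obtain x where x: "\<And>i. ((\<sigma> i, x i), (\<sigma> (Suc i), x i)) \<in> GS_A S \<and>
      seg_lift (\<sigma> i) (x i) \<in> F i \<and> seg_lift (\<sigma> (Suc i)) (x i) \<in> F (Suc i)"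
    by (metis choice)
  have "n \<ge> 3"
    using simple_depth_cycle_length f by blast
  then show ?thesis
    using x by (intro that[OF _ F_inj F_mod \<sigma>_mod \<sigma>, of x]) simp_all
qed

lemma mixed_cycle_of_depth_cycle:
  assumes "has_depth_cycle (pieces S C)" and cut: "\<And>s x. (s, x) \<in> U \<Longrightarrow> seg_lift s x \<in> C"
  shows "has_mixed_cycle (GS_V S - U) {e \<in> GS_E S. e \<inter> U = {}}
    {a \<in> GS_A S. fst a \<notin> U \<and> snd a \<notin> U}"
proof -
  obtain n F \<sigma> x where n: "n \<ge> 3" and inj: "inj_on F {..<n}"
    and F_mod: "\<And>i. F (i mod n) = F i" and \<sigma>_mod: "\<And>i. \<sigma> (i mod n) = \<sigma> i"
    and \<sigma>: "\<And>i. \<sigma> i \<in> S" "\<And>i. F i \<in> components (\<sigma> i - C)"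
    and x_arc: "\<And>i. ((\<sigma> i, x i), (\<sigma> (Suc i), x i)) \<in> GS_A S"
    and x_lift: "\<And>i. seg_lift (\<sigma> i) (x i) \<in> F i" "\<And>i. seg_lift (\<sigma> (Suc i)) (x i) \<in> F (Suc i)"
    by (rule crossing_cycle_of_depth_cycle[OF assms(1)]) (rule that; assumption)
  have x_Ipts: "x i \<in> Ipts S (\<sigma> i)" "x i \<in> Ipts S (\<sigma> (Suc i))" for i
    using GS_A_vertices[OF x_arc] unfolding GS_V_def by simp_all
  have not_cut: "(\<sigma> i, z) \<notin> U" if "seg_lift (\<sigma> i) z \<in> F i" for i z
    using cut \<sigma>(2) that in_components_subset by blast
  have next_crossing: "x (Suc i mod n) \<in> Ipts S (\<sigma> (Suc i))"
    "seg_lift (\<sigma> (Suc i)) (x (Suc i mod n)) \<in> F (Suc i)" for i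
    using x_Ipts(1)[of "Suc i mod n"] x_lift(1)[of "Suc i mod n"] \<sigma>_mod[of "Suc i"] F_mod[of "Suc i"]
    by simp_all
  \<comment> \<open>Block \<open>i\<close> runs inside the piece \<open>F (Suc i)\<close> between its crossings with \<open>F i\<close> and \<open>F (Suc (Suc i))\<close>.\<close>
  obtain ps where "\<And>i. piece_path S (F (Suc i)) (\<sigma> (Suc i)) (x i) (x (Suc i mod n)) (ps i)"
    using piece_path_exists[OF \<sigma>(1) \<sigma>(2) x_Ipts(2) x_lift(2) next_crossing] by (metis choice)
  then have ps: "ps i \<noteq> []" "hd (ps i) = (\<sigma> (Suc i), x i)" "last (ps i) = (\<sigma> (Suc i), x (Suc i mod n))"
    "distinct (ps i)" "successively (\<lambda>u w. {u, w} \<in> GS_E S) (ps i)"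
    and ps_set: "set (ps i) \<subseteq> {(\<sigma> (Suc i), z) | z. z \<in> Ipts S (\<sigma> (Suc i)) \<and>
      seg_lift (\<sigma> (Suc i)) z \<in> F (Suc i)}" for i
    unfolding piece_path_def by blast+
  have ps_vertices: "set (ps i) \<subseteq> GS_V S - U" for i
    using ps_set[of i] \<sigma>(1) not_cut unfolding GS_V_def by blast
  show ?thesis
  proof (rule has_mixed_cycle_of_blocks[OF n])
    show "ps i \<noteq> [] \<and> distinct (ps i) \<and> set (ps i) \<subseteq> GS_V S - U \<and>
        successively (\<lambda>u w. {u, w} \<in> {e \<in> GS_E S. e \<inter> U = {}}) (ps i)" for i
    proof -
      have "successively (\<lambda>u w. {u, w} \<in> {e \<in> GS_E S. e \<inter> U = {}}) (ps i)"
        by (rule successively_mono[OF ps(5)]) (use ps_vertices[of i] in auto)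
      then show ?thesis
        using ps(1,4) ps_vertices[of i] by simp
    qed
    show "set (ps i) \<inter> set (ps j) = {}" if "i < n" "j < n" "i \<noteq> j" for i j
    proof (rule ccontr)
      assume "set (ps i) \<inter> set (ps j) \<noteq> {}"
      then obtain z where "seg_lift (\<sigma> (Suc i)) z \<in> F (Suc i)" "seg_lift (\<sigma> (Suc j)) z \<in> F (Suc j)"
        "\<sigma> (Suc i) = \<sigma> (Suc j)"
        using ps_set[of i] ps_set[of j] by blast
      then have "F (Suc i mod n) = F (Suc j mod n)"
        using pieces_eq_if_common_point(2)[OF \<sigma>(1,1,2,2)] F_mod by metis
      then have "Suc i mod n = Suc j mod n"
        using inj n by (simp add: inj_on_eq_iff)
      with that show False
        by (auto simp: mod_Suc split: if_splits)
    qed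
    show "(last (ps i), hd (ps (Suc i mod n))) \<in> {a \<in> GS_A S. fst a \<notin> U \<and> snd a \<notin> U}" for i
      using x_arc[of "Suc i mod n"] x_lift[of "Suc i mod n"] not_cut ps(2,3) \<sigma>_mod[of "Suc i"]
        F_mod[of "Suc i"] by simp
  qed
qed

lemma cuts_of_feedback_vertex_set:
  assumes fvs: "feedback_vertex_set (GS_V S) (GS_E S) (GS_A S) U"
  defines "C \<equiv> (\<lambda>v. seg_lift (fst v) (snd v)) ` U"
  shows "finite C" "card C \<le> card U" "C \<subseteq> \<Union>S" "\<not> has_depth_cycle (pieces S C)"
proof -
  have "U \<subseteq> GS_V S"
    using fvs unfolding feedback_vertex_set_def by simp
  then have "finite U"
    using finite_GS_V finite_subset by blast
  then show "finite C" "card C \<le> card U"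
    unfolding C_def by (simp_all add: card_image_le)
  show "C \<subseteq> \<Union>S"
  proof
    fix c
    assume "c \<in> C"
    then obtain v where "v \<in> U" "c = seg_lift (fst v) (snd v)"
      unfolding C_def by blast
    moreover from this have "fst v \<in> S" "snd v \<in> Ipts S (fst v)"
      using \<open>U \<subseteq> GS_V S\<close> unfolding GS_V_def by auto
    ultimately show "c \<in> \<Union>S"
      using seg_lift_in_segment by blast
  qed
  show "\<not> has_depth_cycle (pieces S C)"
  proof
    assume "has_depth_cycle (pieces S C)"
    then have "has_mixed_cycle (GS_V S - U) {e \<in> GS_E S. e \<inter> U = {}}
        {a \<in> GS_A S. fst a \<notin> U \<and> snd a \<notin> U}"
      by (rule mixed_cycle_of_depth_cycle) (auto simp: C_def rev_image_eqI)
    then show False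
      using fvs unfolding feedback_vertex_set_def delete_vertices_def by simp
  qed
qed

subsection \<open>Charging cuts to vertices\<close>

lemma charges_unique:
  assumes "charges S c v" "charges S c w" "v \<in> GS_V S" "w \<in> GS_V S"
  shows "v = w"
proof -
  obtain s x t y where v: "v = (s, x)" "s \<in> S" "x \<in> Ipts S s" and w: "w = (t, y)" "t \<in> S" "y \<in> Ipts S t"
    using assms(3,4) unfolding GS_V_def by auto
  have "c \<in> s" "c \<in> t"
    using assms(1,2) v w by simp_all
  then have "s = t"
    using segments_disjoint v(2) w(2) by blast
  then have "\<not> seg_coord s x < seg_coord s y" "\<not> seg_coord s y < seg_coord s x"
    using assms(1,2) v w by (auto dest: leD)
  then show ?thesis
    using v w \<open>s = t\<close> inj_on_seg_coord_Ipts[OF v(2)] by (simp add: inj_on_eq_iff)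
qed

lemma card_charged_vertices_le:
  assumes "finite C"
  shows "card (charged_vertices S C) \<le> card C"
  using assms charges_unique
  by (intro card_le_if_inj_on_rel[where r = "\<lambda>v c. charges S c v"]) (auto simp: charged_vertices_def)

lemma charged_if_lift_cut:
  assumes "(s, x) \<in> GS_V S" "seg_lift s x \<in> C"
  shows "(s, x) \<in> charged_vertices S C"
proof -
  have "s \<in> S" "x \<in> proj ` s"
    using assms(1) Ipts_subset unfolding GS_V_def by auto
  then have "seg_lift s x \<in> s" "proj (seg_lift s x) = x"
    using proj_seg_lift nonvertical by blast+
  then have "charges S (seg_lift s x) (s, x)"
    by simp
  then show ?thesis
    using assms unfolding charged_vertices_def by blast
qed

lemma cut_on_edge_charged:
  assumes e: "{(s, x), (s, y)} \<in> GS_E S" and le: "seg_coord s x \<le> seg_coord s y"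
    and c: "c \<in> C" "c \<in> closed_segment (seg_lift s x) (seg_lift s y)"
  shows "(s, x) \<in> charged_vertices S C \<or> (s, y) \<in> charged_vertices S C"
proof -
  have vertices: "(s, x) \<in> GS_V S" "(s, y) \<in> GS_V S"
    using GS_E_vertices[OF e] by simp_all
  then have s: "s \<in> S" and xy: "x \<in> Ipts S s" "y \<in> Ipts S s"
    unfolding GS_V_def by simp_all
  have nv: "nonvertical_segment s"
    using nonvertical s by blast
  have lifts: "seg_lift s x \<in> s" "seg_lift s y \<in> s" "proj (seg_lift s x) = x" "proj (seg_lift s y) = y"
    using xy proj_seg_lift[OF nv] Ipts_subset by blast+
  have "c \<in> s"
    using c(2) convex_segment[OF nv] lifts(1,2) closed_segment_subset by blast
  then have between: "seg_coord s x \<le> seg_coord s (proj c)" "seg_coord s (proj c) \<le> seg_coord s y"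
    using closed_segment_iff_seg_coord[OF nv lifts(1,2) \<open>c \<in> s\<close>] c(2) le lifts(3,4) by auto
  show ?thesis
  proof (cases "seg_coord s (proj c) = seg_coord s y")
    case True
    then have "c = seg_lift s y"
      using seg_lift_proj[OF nv \<open>c \<in> s\<close>] unfolding seg_lift_def by metis
    then show ?thesis
      using charged_if_lift_cut[OF vertices(2)] c(1) by blast
  next
    case False
    have "seg_coord s (proj c) < seg_coord s z" if "z \<in> Ipts S s" "seg_coord s x < seg_coord s z" for z
      using GS_E_consecutive(2)[OF e that(1)] that(2) between False by auto
    then have "charges S c (s, x)"
      using \<open>c \<in> s\<close> between by simp
    then show ?thesis
      using vertices(1) c(1) unfolding charged_vertices_def by blast
  qed
qed

lemma edge_avoids_cuts:
  assumes e: "{(s, x), (s, y)} \<in> GS_E S"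
    and uncharged: "(s, x) \<notin> charged_vertices S C" "(s, y) \<notin> charged_vertices S C"
  shows "closed_segment (seg_lift s x) (seg_lift s y) \<inter> C = {}"
proof (cases "seg_coord s x \<le> seg_coord s y")
  case True
  then show ?thesis
    using cut_on_edge_charged[OF e True] uncharged by blast
next
  case False
  have "{(s, y), (s, x)} \<in> GS_E S"
    using e by (simp add: insert_commute)
  with False show ?thesis
    using cut_on_edge_charged[of s y x] uncharged closed_segment_commute by fastforce
qed

lemma piece_of_uncharged_vertex:
  assumes "(s, x) \<in> GS_V S - charged_vertices S C"
  shows "piece_of C (s, x) \<in> pieces S C" "seg_lift s x \<in> piece_of C (s, x)"
proof -
  have "s \<in> S" "x \<in> Ipts S s"
    using assms unfolding GS_V_def by auto
  moreover have "seg_lift s x \<notin> C"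
    using assms charged_if_lift_cut by blast
  ultimately have "seg_lift s x \<in> s - C"
    using seg_lift_in_segment by blast
  then show "seg_lift s x \<in> piece_of C (s, x)" "piece_of C (s, x) \<in> pieces S C"
    unfolding pieces_def using \<open>s \<in> S\<close> components_iff by auto
qed

lemma piece_of_edge:
  assumes "{u, w} \<in> GS_E S" "u \<notin> charged_vertices S C" "w \<notin> charged_vertices S C"
  shows "piece_of C u = piece_of C w"
proof -
  obtain s x y where uw: "u = (s, x)" "w = (s, y)" "s \<in> S" "x \<in> Ipts S s" "y \<in> Ipts S s"
    using assms(1) by (rule GS_E_edge)
  have "closed_segment (seg_lift s x) (seg_lift s y) \<inter> C = {}"
    using assms uw by (intro edge_avoids_cuts) auto
  then show ?thesis
    using same_component_if_segment_avoids seg_lift_in_segment uw by simp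
qed

lemma piece_of_arc:
  assumes arc: "((s, x), (t, y)) \<in> GS_A S"
    and uncharged: "(s, x) \<notin> charged_vertices S C" "(t, y) \<notin> charged_vertices S C"
  shows "(piece_of C (s, x), piece_of C (t, y)) \<in> above_on (pieces S C)"
proof -
  have "x = y" "s \<in> S" "t \<in> S" "s \<noteq> t" "above s t" "x \<in> proj ` s \<inter> proj ` t"
    using arc unfolding mem_GS_A_iff by blast+
  then have "zc (seg_lift s x) > zc (seg_lift t y)" "proj (seg_lift s x) = proj (seg_lift t y)"
    using above_segments_at_crossing proj_seg_lift(1) nonvertical by auto
  moreover have "(s, x) \<in> GS_V S - charged_vertices S C" "(t, y) \<in> GS_V S - charged_vertices S C"
    using GS_A_vertices[OF arc] uncharged by simp_all
  ultimately show ?thesis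
    using piece_of_uncharged_vertex unfolding above_on_def above_def by blast
qed

lemma feedback_vertex_set_of_cuts:
  assumes "\<not> has_depth_cycle (pieces S C)"
  shows "feedback_vertex_set (GS_V S) (GS_E S) (GS_A S) (charged_vertices S C)"
proof -
  let ?U = "charged_vertices S C"
  let ?V' = "GS_V S - ?U" and ?E' = "{e \<in> GS_E S. e \<inter> ?U = {}}"
    and ?A' = "{a \<in> GS_A S. fst a \<notin> ?U \<and> snd a \<notin> ?U}"
  have arc_image: "(piece_of C u, piece_of C w) \<in> above_on (pieces S C)" if "(u, w) \<in> ?A'" for u w
    using piece_of_arc[of "fst u" "snd u" "fst w" "snd w"] that by simp
  have edge_image: "piece_of C u = piece_of C w" if "{u, w} \<in> ?E'" for u w
    using that by (intro piece_of_edge) auto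
  have "\<not> mixed_cycle ?V' ?E' ?A' v l" for v l
  proof
    assume cycle: "mixed_cycle ?V' ?E' ?A' v l"
    show False
    proof (cases "\<exists>i < l - 1. (v i, v (Suc i)) \<in> ?A'")
      case True
      then obtain i where i: "i < l - 1" "(v i, v (Suc i)) \<in> ?A'"
        by blast
      have "(piece_of C (v 0), piece_of C (v (l - 1))) \<in> (above_on (pieces S C))\<^sup>+"
        using mixed_cycle_step[OF cycle] arc_image edge_image i by (rule walk_in_trancl_image)
      moreover have "v (l - 1) = v 0"
        using cycle unfolding mixed_cycle_def by simp
      ultimately show False
        using assms unfolding has_depth_cycle_iff_trancl by auto
    next
      case False
      show False
      proof (rule no_mixed_cycle_without_arcs[OF cycle])
        show "(v i, v (Suc i)) \<notin> ?A'" if "i < l - 1" for i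
          using False that by blast
        show "seg_coord (fst u) (snd u) \<noteq> seg_coord (fst w) (snd w)" if "{u, w} \<in> ?E'" for u w
          using GS_E_seg_coord_neq that by simp
        show "w = w'" if "{u, w} \<in> ?E'" "{u, w'} \<in> ?E'"
          "seg_coord (fst w) (snd w) < seg_coord (fst u) (snd u)"
          "seg_coord (fst w') (snd w') < seg_coord (fst u) (snd u)" for u w w'
          using that by (intro GS_E_unique_lower) simp_all
      qed
    qed
  qed
  moreover have "?U \<subseteq> GS_V S"
    unfolding charged_vertices_def by blast
  ultimately show ?thesis
    unfolding feedback_vertex_set_def delete_vertices_def has_mixed_cycle_def by simp
qed

end

theorem lemma1:
  fixes S :: "point3 set set" and k :: nat
  assumes "finite S"
    and "\<forall>s\<in>S. nonvertical_segment s"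
    and "general_position S"
  shows "(\<exists>C. finite C \<and> C \<subseteq> \<Union>S \<and> card C \<le> k \<and> \<not> has_depth_cycle (pieces S C))
         \<longleftrightarrow> (\<exists>U. feedback_vertex_set (GS_V S) (GS_E S) (GS_A S) U \<and> card U \<le> k)"
proof -
  interpret segment_arrangement S
    using assms by unfold_locales auto
  show ?thesis
  proof
    assume "\<exists>C. finite C \<and> C \<subseteq> \<Union>S \<and> card C \<le> k \<and> \<not> has_depth_cycle (pieces S C)"
    then obtain C where C: "finite C" "card C \<le> k" "\<not> has_depth_cycle (pieces S C)"
      by blast
    show "\<exists>U. feedback_vertex_set (GS_V S) (GS_E S) (GS_A S) U \<and> card U \<le> k"
      using feedback_vertex_set_of_cuts[OF C(3)] card_charged_vertices_le[OF C(1)] C(2)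
      by (intro exI[of _ "charged_vertices S C"]) simp
  next
    assume "\<exists>U. feedback_vertex_set (GS_V S) (GS_E S) (GS_A S) U \<and> card U \<le> k"
    then obtain U where U: "feedback_vertex_set (GS_V S) (GS_E S) (GS_A S) U" "card U \<le> k"
      by blast
    show "\<exists>C. finite C \<and> C \<subseteq> \<Union>S \<and> card C \<le> k \<and> \<not> has_depth_cycle (pieces S C)"
      using cuts_of_feedback_vertex_set[OF U(1)] U(2)
      by (intro exI[of _ "(\<lambda>v. seg_lift (fst v) (snd v)) ` U"]) simp
  qed
qed

end
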